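(* Let $k,n\in\mathbb{N}$, let $p_0,\dots,p_k$ be positive reals summing to $1$, and let $\boldsymbol{X}=[X_0,\dots,X_k]^\top$ have the multinomial distribution $\Pr\{\boldsymbol{X}=\boldsymbol{x}\}=\frac{n!}{\prod_{i=0}^kx_i!}\prod_{i=0}^kp_i^{x_i}$ for nonnegative integers $x_i$ with $\sum_ix_i=n$. Let $\mu_i=np_i$, $\boldsymbol{\mu}=[\mu_0,\dots,\mu_k]^\top$, and let $z_0,\dots,z_k$ be nonnegative integers with $\sum_{i=0}^kz_i=n$, $\boldsymbol{z}=[z_0,\dots,z_k]^\top$. Then $$\Pr\{\boldsymbol{X}\boldsymbol{\prec}\boldsymbol{z}\}\le\prod_{i=0}^k\Big(\frac{\mu_i}{z_i}\Big)^{z_i}\ \text{ if }\boldsymbol{z}\boldsymbol{\prec}\boldsymbol{\mu},\qquad \Pr\{\boldsymbol{X}\boldsymbol{\succ}\boldsymbol{z}\}\le\prod_{i=0}^k\Big(\frac{\mu_i}{z_i}\Big)^{z_i}\ \text{ if }\boldsymbol{z}\boldsymbol{\succ}\boldsymbol{\mu}.$$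
   Context: For vectors $\boldsymbol{x}=[x_0,\dots,x_k]^\top,\boldsymbol{y}=[y_0,\dots,y_k]^\top$, $\boldsymbol{x}\boldsymbol{\prec}\boldsymbol{y}$ means $x_i\le y_i$ for $i=1,\dots,k$ (index $0$ is not compared), and $\boldsymbol{x}\boldsymbol{\succ}\boldsymbol{y}$ means $x_i\ge y_i$ for $i=1,\dots,k$. The convention $0^0=1$ is used. *)

theory Defs
  imports Complex_Main
begin

text \<open>Vectors [x_0,...,x_k] are represented as functions on nat, only indices 0..k matter.
  Outcomes of the multinomial experiment: nonnegative integer vectors summing to n
  (normalised to be 0 outside 0..k so that the outcome set is finite).\<close>

definition multinomial_support :: "nat \<Rightarrow> nat \<Rightarrow> (nat \<Rightarrow> nat) set" where
  "multinomial_support k n = {x. (\<forall>i>k. x i = 0) \<and> (\<Sum>i=0..k. x i) = n}"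

definition multinomial_pmf :: "nat \<Rightarrow> nat \<Rightarrow> (nat \<Rightarrow> real) \<Rightarrow> (nat \<Rightarrow> nat) \<Rightarrow> real" where
  "multinomial_pmf k n p x =
     fact n / (\<Prod>i=0..k. fact (x i)) * (\<Prod>i=0..k. p i ^ x i)"

definition multinomial_prob :: "nat \<Rightarrow> nat \<Rightarrow> (nat \<Rightarrow> real) \<Rightarrow> ((nat \<Rightarrow> nat) \<Rightarrow> bool) \<Rightarrow> real" where
  "multinomial_prob k n p E = (\<Sum>x\<in>{x\<in>multinomial_support k n. E x}. multinomial_pmf k n p x)"

definition vprec :: "nat \<Rightarrow> (nat \<Rightarrow> 'a::ord) \<Rightarrow> (nat \<Rightarrow> 'a) \<Rightarrow> bool" where
  "vprec k x y \<longleftrightarrow> (\<forall>i\<in>{1..k}. x i \<le> y i)"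

definition vsucc :: "nat \<Rightarrow> (nat \<Rightarrow> 'a::ord) \<Rightarrow> (nat \<Rightarrow> 'a) \<Rightarrow> bool" where
  "vsucc k x y \<longleftrightarrow> (\<forall>i\<in>{1..k}. x i \<ge> y i)"

end

theory Submission
  imports Defs
begin

text \<open>Exponential tilting: if weights \<open>s i \<ge> 0\<close> satisfy \<open>\<Prod> s i ^ z i \<le> \<Prod> s i ^ x i\<close> for
  every outcome \<open>x\<close> of an event, then by the multinomial theorem the event has probability at
  most \<open>(\<Sum> p i * s i) ^ n / \<Prod> s i ^ z i\<close>. With \<open>s i = z i / \<mu> i\<close> the numerator is \<open>1\<close> and
  the quotient is the claimed bound. If \<open>z \<prec> \<mu>\<close> then \<open>s i \<le> 1 \<le> s 0\<close> for \<open>i \<ge> 1\<close>, because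
  \<open>z\<close> and \<open>\<mu>\<close> have the same total \<open>n\<close>; on the event \<open>X \<prec> z\<close> the outcome \<open>x\<close> arises from \<open>z\<close>
  by moving mass from the coordinates \<open>i \<ge> 1\<close> to coordinate \<open>0\<close>, which can only increase the
  monomial. The case \<open>\<succ>\<close> is symmetric.\<close>

lemma multinomial_support_0: "multinomial_support 0 n = {(\<lambda>i. if i = 0 then n else 0)}"
  unfolding multinomial_support_def by (auto simp: fun_eq_iff)

lemma multinomial_support_Suc:
  "multinomial_support (Suc k) n =
     (\<lambda>(j, y). y(Suc k := j)) ` (SIGMA j:{0..n}. multinomial_support k (n - j))"
proof (rule set_eqI, rule iffI)
  fix x assume x: "x \<in> multinomial_support (Suc k) n"
  let ?y = "x(Suc k := 0)" and ?j = "x (Suc k)"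
  have s: "(\<Sum>i=0..k. x i) + x (Suc k) = n" using x by (simp add: multinomial_support_def)
  have "(\<Sum>i=0..k. ?y i) = (\<Sum>i=0..k. x i)" by (intro sum.cong) auto
  then have "?y \<in> multinomial_support k (n - ?j)" using x s
    by (auto simp: multinomial_support_def)
  moreover have "?j \<in> {0..n}" using s by auto
  ultimately show "x \<in> (\<lambda>(j, y). y(Suc k := j)) ` (SIGMA j:{0..n}. multinomial_support k (n - j))"
    by (intro image_eqI[of _ _ "(?j, ?y)"]) auto
next
  fix x assume "x \<in> (\<lambda>(j, y). y(Suc k := j)) ` (SIGMA j:{0..n}. multinomial_support k (n - j))"
  then obtain j y where j: "j \<le> n" and y: "y \<in> multinomial_support k (n - j)"
    and x: "x = y(Suc k := j)"
    by auto
  have "(\<Sum>i=0..k. x i) = (\<Sum>i=0..k. y i)" unfolding x by (intro sum.cong) auto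
  then show "x \<in> multinomial_support (Suc k) n" using y j unfolding x
    by (auto simp: multinomial_support_def)
qed

lemma inj_on_multinomial_support_Suc:
  "inj_on (\<lambda>(j, y). y(Suc k := j)) (SIGMA j:{0..n}. multinomial_support k (n - j))"
proof (rule inj_onI, clarsimp)
  fix j y j' y'
  assume "y \<in> multinomial_support k (n - j)" "y' \<in> multinomial_support k (n - j')"
    and eq: "y(Suc k := j) = y'(Suc k := j')"
  then have "y = (y(Suc k := j))(Suc k := 0)" "y' = (y'(Suc k := j'))(Suc k := 0)"
    by (auto simp: multinomial_support_def fun_eq_iff)
  moreover have "j = j'" using fun_cong[OF eq, of "Suc k"] by simp
  ultimately show "j = j' \<and> y = y'" using eq by metis
qed

lemma finite_multinomial_support: "finite (multinomial_support k n)"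
  by (induction k arbitrary: n) (simp_all add: multinomial_support_0 multinomial_support_Suc)

theorem multinomial_theorem:
  fixes q :: "nat \<Rightarrow> 'a::field_char_0"
  shows "(\<Sum>x\<in>multinomial_support k n. fact n / (\<Prod>i=0..k. fact (x i)) * (\<Prod>i=0..k. q i ^ x i))
        = (\<Sum>i=0..k. q i) ^ n"
proof (induction k arbitrary: n)
  case 0
  then show ?case by (simp add: multinomial_support_0)
next
  case (Suc k)
  define c where "c m y = fact m / (\<Prod>i=0..k. fact (y i)) * (\<Prod>i=0..k. q i ^ y i)" for m y
  let ?f = "\<lambda>x. fact n / (\<Prod>i=0..Suc k. fact (x i)) * (\<Prod>i=0..Suc k. q i ^ x i) :: 'a"
  have split: "?f (y(Suc k := j)) = of_nat (n choose j) * q (Suc k) ^ j * c (n - j) y"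
    if "j \<le> n" for j y
  proof -
    have "(\<Prod>i=0..k. fact ((y(Suc k := j)) i)) = (\<Prod>i=0..k. fact (y i) :: 'a)"
      "(\<Prod>i=0..k. q i ^ (y(Suc k := j)) i) = (\<Prod>i=0..k. q i ^ y i)"
      by (intro prod.cong; simp)+
    then show ?thesis
      unfolding binomial_fact[OF that]
      by (simp add: c_def prod.atLeast0_atMost_Suc field_simps)
  qed
  have "(\<Sum>x\<in>multinomial_support (Suc k) n. ?f x)
      = (\<Sum>(j, y)\<in>(SIGMA j:{0..n}. multinomial_support k (n - j)). ?f (y(Suc k := j)))"
    unfolding multinomial_support_Suc
    by (subst sum.reindex[OF inj_on_multinomial_support_Suc]) (simp add: case_prod_unfold)
  also have "\<dots> = (\<Sum>j=0..n. \<Sum>y\<in>multinomial_support k (n - j). ?f (y(Suc k := j)))"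
    by (rule sum.Sigma[symmetric]) (auto simp: finite_multinomial_support)
  also have "\<dots> = (\<Sum>j=0..n. of_nat (n choose j) * q (Suc k) ^ j *
                      (\<Sum>y\<in>multinomial_support k (n - j). c (n - j) y))"
  proof (rule sum.cong[OF refl])
    fix j assume "j \<in> {0..n}"
    then show "(\<Sum>y\<in>multinomial_support k (n - j). ?f (y(Suc k := j))) =
        of_nat (n choose j) * q (Suc k) ^ j * (\<Sum>y\<in>multinomial_support k (n - j). c (n - j) y)"
      by (simp only: split atLeastAtMost_iff sum_distrib_left)
  qed
  also have "\<dots> = (\<Sum>j\<le>n. of_nat (n choose j) * q (Suc k) ^ j * (\<Sum>i=0..k. q i) ^ (n - j))"
    using Suc.IH by (simp add: c_def atLeast0AtMost)
  also have "\<dots> = (q (Suc k) + (\<Sum>i=0..k. q i)) ^ n"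
    by (rule binomial_ring[symmetric])
  finally show ?case by (simp add: add.commute)
qed

lemma multinomial_pmf_nonneg:
  assumes "\<forall>i\<in>{0..k}. p i \<ge> 0"
  shows "multinomial_pmf k n p x \<ge> 0"
  using assms unfolding multinomial_pmf_def
  by (intro mult_nonneg_nonneg divide_nonneg_nonneg prod_nonneg) auto

lemma multinomial_prob_le_tilted:
  fixes p s :: "nat \<Rightarrow> real"
  assumes p: "\<forall>i\<in>{0..k}. p i \<ge> 0" and s: "\<forall>i\<in>{0..k}. s i \<ge> 0"
    and pos: "(\<Prod>i=0..k. s i ^ z i) > 0"
    and tilt: "\<And>x. x \<in> multinomial_support k n \<Longrightarrow> E x \<Longrightarrow>
                 (\<Prod>i=0..k. s i ^ z i) \<le> (\<Prod>i=0..k. s i ^ x i)"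
  shows "multinomial_prob k n p E \<le> (\<Sum>i=0..k. p i * s i) ^ n / (\<Prod>i=0..k. s i ^ z i)"
proof -
  define C where "C = (\<Prod>i=0..k. s i ^ z i)"
  let ?g = "\<lambda>x. multinomial_pmf k n p x * ((\<Prod>i=0..k. s i ^ x i) / C)"
  have g_nonneg: "?g x \<ge> 0" for x
    using multinomial_pmf_nonneg[OF p] s pos
    by (intro mult_nonneg_nonneg divide_nonneg_pos prod_nonneg) (auto simp: C_def)
  have "multinomial_prob k n p E = (\<Sum>x | x \<in> multinomial_support k n \<and> E x. multinomial_pmf k n p x)"
    by (simp add: multinomial_prob_def)
  also have "\<dots> \<le> (\<Sum>x | x \<in> multinomial_support k n \<and> E x. ?g x)"
  proof (rule sum_mono)
    fix x assume "x \<in> {x. x \<in> multinomial_support k n \<and> E x}"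
    then have "1 \<le> (\<Prod>i=0..k. s i ^ x i) / C" using tilt[of x] pos by (simp add: C_def)
    then show "multinomial_pmf k n p x \<le> ?g x"
      using mult_left_mono[OF _ multinomial_pmf_nonneg[OF p]] by fastforce
  qed
  also have "\<dots> \<le> (\<Sum>x\<in>multinomial_support k n. ?g x)"
    by (rule sum_mono2[OF finite_multinomial_support], blast, rule g_nonneg)
  also have "\<dots> = (\<Sum>x\<in>multinomial_support k n.
                    fact n / (\<Prod>i=0..k. fact (x i)) * (\<Prod>i=0..k. (p i * s i) ^ x i)) / C"
    unfolding sum_divide_distrib multinomial_pmf_def
    by (intro sum.cong) (auto simp: power_mult_distrib prod.distrib)
  also have "\<dots> = (\<Sum>i=0..k. p i * s i) ^ n / C"
    by (simp only: multinomial_theorem)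
  finally show ?thesis by (simp add: C_def)
qed

lemma prod_power_shift_le:
  fixes s :: "'b \<Rightarrow> 'a::linordered_semidom"
  assumes "\<forall>i\<in>I. x i \<le> z i \<and> 0 \<le> s i \<and> s i \<le> t"
  shows "(\<Prod>i\<in>I. s i ^ z i) \<le> (\<Prod>i\<in>I. s i ^ x i) * t ^ (\<Sum>i\<in>I. z i - x i)"
proof -
  have "(\<Prod>i\<in>I. s i ^ z i) = (\<Prod>i\<in>I. s i ^ x i * s i ^ (z i - x i))"
    using assms by (intro prod.cong) (simp_all flip: power_add)
  also have "\<dots> \<le> (\<Prod>i\<in>I. s i ^ x i * t ^ (z i - x i))"
    using assms by (intro prod_mono conjI mult_left_mono power_mono) auto
  finally show ?thesis by (simp add: prod.distrib power_sum)
qed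

lemma prod_power_shift_ge:
  fixes s :: "'b \<Rightarrow> 'a::linordered_semidom"
  assumes "\<forall>i\<in>I. x i \<le> z i \<and> 0 \<le> t \<and> t \<le> s i"
  shows "(\<Prod>i\<in>I. s i ^ x i) * t ^ (\<Sum>i\<in>I. z i - x i) \<le> (\<Prod>i\<in>I. s i ^ z i)"
proof -
  have "(\<Prod>i\<in>I. s i ^ x i) * t ^ (\<Sum>i\<in>I. z i - x i) = (\<Prod>i\<in>I. s i ^ x i * t ^ (z i - x i))"
    by (simp add: prod.distrib power_sum)
  also have "\<dots> \<le> (\<Prod>i\<in>I. s i ^ x i * s i ^ (z i - x i))"
    using assms by (intro prod_mono conjI mult_left_mono power_mono) auto
  also have "\<dots> = (\<Prod>i\<in>I. s i ^ z i)"
    using assms by (intro prod.cong) (simp_all flip: power_add)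
  finally show ?thesis .
qed

lemma vprec_sum_eq_imp_coord_0_eq:
  fixes x z :: "nat \<Rightarrow> nat"
  assumes "(\<Sum>i=0..k. x i) = (\<Sum>i=0..k. z i)" and "vprec k x z"
  shows "x 0 = z 0 + (\<Sum>i=1..k. z i - x i)"
proof -
  have "(\<Sum>i=1..k. z i) = (\<Sum>i=1..k. x i) + (\<Sum>i=1..k. z i - x i)"
    unfolding sum.distrib[symmetric] using assms(2) by (intro sum.cong) (auto simp: vprec_def)
  then show ?thesis using assms(1) by (simp add: sum.atLeast_Suc_atMost)
qed

lemma vprec_sum_eq_imp_coord_0_ge:
  fixes a b :: "nat \<Rightarrow> 'a::ordered_ab_group_add"
  assumes "(\<Sum>i=0..k. a i) = (\<Sum>i=0..k. b i)" and "vprec k a b"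
  shows "b 0 \<le> a 0"
proof -
  have "(\<Sum>i=1..k. a i) \<le> (\<Sum>i=1..k. b i)"
    using assms(2) by (intro sum_mono) (auto simp: vprec_def)
  moreover have "a 0 - b 0 = (\<Sum>i=1..k. b i) - (\<Sum>i=1..k. a i)"
    using assms(1) by (simp add: sum.atLeast_Suc_atMost algebra_simps)
  ultimately show ?thesis by (metis diff_ge_0_iff_ge)
qed

lemma prod_power_le_of_vprec:
  fixes s :: "nat \<Rightarrow> 'a::linordered_semidom"
  assumes s: "0 \<le> s 0" "\<forall>i\<in>{1..k}. 0 \<le> s i \<and> s i \<le> s 0"
    and xz: "vprec k x z" and sums: "(\<Sum>i=0..k. x i) = (\<Sum>i=0..k. z i)"
  shows "(\<Prod>i=0..k. s i ^ z i) \<le> (\<Prod>i=0..k. s i ^ x i)"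
proof -
  have "(\<Prod>i=0..k. s i ^ z i) = s 0 ^ z 0 * (\<Prod>i=1..k. s i ^ z i)"
    by (simp add: prod.atLeast_Suc_atMost)
  also have "\<dots> \<le> s 0 ^ z 0 * ((\<Prod>i=1..k. s i ^ x i) * s 0 ^ (\<Sum>i=1..k. z i - x i))"
    using prod_power_shift_le[of "{1..k}" x z s "s 0"] s xz
    by (intro mult_left_mono) (auto simp: vprec_def)
  also have "\<dots> = (\<Prod>i=0..k. s i ^ x i)"
    by (simp add: vprec_sum_eq_imp_coord_0_eq[OF sums xz] prod.atLeast_Suc_atMost power_add mult_ac)
  finally show ?thesis .
qed

lemma prod_power_le_of_vsucc:
  fixes s :: "nat \<Rightarrow> 'a::linordered_semidom"
  assumes s: "0 \<le> s 0" "\<forall>i\<in>{1..k}. s 0 \<le> s i"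
    and xz: "vsucc k x z" and sums: "(\<Sum>i=0..k. x i) = (\<Sum>i=0..k. z i)"
  shows "(\<Prod>i=0..k. s i ^ z i) \<le> (\<Prod>i=0..k. s i ^ x i)"
proof -
  have zx: "vprec k z x" using xz by (simp add: vprec_def vsucc_def)
  have "(\<Prod>i=0..k. s i ^ z i) = s 0 ^ x 0 * ((\<Prod>i=1..k. s i ^ z i) * s 0 ^ (\<Sum>i=1..k. x i - z i))"
    by (simp add: vprec_sum_eq_imp_coord_0_eq[OF sums[symmetric] zx]
        prod.atLeast_Suc_atMost power_add mult_ac)
  also have "\<dots> \<le> s 0 ^ x 0 * (\<Prod>i=1..k. s i ^ x i)"
    using prod_power_shift_ge[of "{1..k}" z x "s 0" s] s zx
    by (intro mult_left_mono) (auto simp: vprec_def)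
  also have "\<dots> = (\<Prod>i=0..k. s i ^ x i)"
    by (simp add: prod.atLeast_Suc_atMost)
  finally show ?thesis .
qed

text \<open>For \<open>n = 0\<close> they are \<open>0\<close> by division by zero, and
  since \<open>0 ^ 0 = 1\<close> the resulting bound needs no case distinction on \<open>n\<close>.\<close>

definition chernoff_weight :: "nat \<Rightarrow> (nat \<Rightarrow> real) \<Rightarrow> (nat \<Rightarrow> nat) \<Rightarrow> nat \<Rightarrow> real" where
  "chernoff_weight n p z i = real (z i) / (real n * p i)"

lemma chernoff_weight_nonneg: "p i \<ge> 0 \<Longrightarrow> chernoff_weight n p z i \<ge> 0"
  by (simp add: chernoff_weight_def)

lemma multinomial_prob_le_ratio_prod:
  assumes p_pos: "\<forall>i\<in>{0..k}. p i > 0" and z_sum: "(\<Sum>i=0..k. z i) = n"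
    and tilt: "\<And>x. x \<in> multinomial_support k n \<Longrightarrow> E x \<Longrightarrow>
                 (\<Prod>i=0..k. chernoff_weight n p z i ^ z i) \<le> (\<Prod>i=0..k. chernoff_weight n p z i ^ x i)"
  shows "multinomial_prob k n p E \<le> (\<Prod>i=0..k. (real n * p i / real (z i)) ^ z i)"
proof -
  define s where "s = chernoff_weight n p z"
  have s_pos: "s i ^ z i > 0" if "i \<in> {0..k}" for i
  proof (cases "z i = 0")
    case False
    have "z i \<le> n" unfolding z_sum[symmetric] using that by (intro member_le_sum) auto
    with False have "n > 0" by simp
    then show ?thesis using False p_pos that by (simp add: s_def chernoff_weight_def)
  qed simp
  have numerator: "(\<Sum>i=0..k. p i * s i) ^ n = 1"
  proof (cases "n = 0")
    case False
    have "(\<Sum>i=0..k. p i * s i) = (\<Sum>i=0..k. real (z i) / real n)"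
      using p_pos by (intro sum.cong) (auto simp: s_def chernoff_weight_def less_imp_neq[symmetric])
    also have "\<dots> = real (\<Sum>i=0..k. z i) / real n"
      by (simp add: sum_divide_distrib)
    also have "\<dots> = 1"
      using False z_sum by simp
    finally show ?thesis by simp
  qed simp
  have "multinomial_prob k n p E \<le> (\<Sum>i=0..k. p i * s i) ^ n / (\<Prod>i=0..k. s i ^ z i)"
    using p_pos s_pos tilt
    by (intro multinomial_prob_le_tilted prod_pos) (auto simp: s_def chernoff_weight_nonneg less_imp_le)
  also have "\<dots> = 1 / (\<Prod>i=0..k. s i ^ z i)"
    by (simp only: numerator)
  also have "\<dots> = (\<Prod>i=0..k. (real n * p i / real (z i)) ^ z i)"
    by (simp add: s_def chernoff_weight_def power_divide prod_dividef)
  finally show ?thesis .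
qed

lemma chernoff_weight_le_weight_0_of_vprec:
  assumes p_pos: "\<forall>i\<in>{0..k}. p i > 0" and p_sum: "(\<Sum>i=0..k. p i) = 1"
    and z_sum: "(\<Sum>i=0..k. z i) = n"
    and z_le: "vprec k (\<lambda>i. real (z i)) (\<lambda>i. real n * p i)"
  shows "\<forall>i\<in>{1..k}. chernoff_weight n p z i \<le> chernoff_weight n p z 0"
proof (cases "n = 0")
  case False
  have "(\<Sum>i=0..k. real (z i)) = (\<Sum>i=0..k. real n * p i)"
    using p_sum z_sum by (simp flip: sum_distrib_left of_nat_sum)
  then have "real n * p 0 \<le> real (z 0)"
    using z_le by (rule vprec_sum_eq_imp_coord_0_ge)
  then have "1 \<le> chernoff_weight n p z 0"
    using False p_pos by (simp add: chernoff_weight_def)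
  moreover have "chernoff_weight n p z i \<le> 1" if "i \<in> {1..k}" for i
    using False p_pos z_le that by (simp add: chernoff_weight_def vprec_def)
  ultimately show ?thesis by force
qed (simp add: chernoff_weight_def)

lemma chernoff_weight_0_le_weight_of_vsucc:
  assumes p_pos: "\<forall>i\<in>{0..k}. p i > 0" and p_sum: "(\<Sum>i=0..k. p i) = 1"
    and z_sum: "(\<Sum>i=0..k. z i) = n"
    and z_ge: "vsucc k (\<lambda>i. real (z i)) (\<lambda>i. real n * p i)"
  shows "\<forall>i\<in>{1..k}. chernoff_weight n p z 0 \<le> chernoff_weight n p z i"
proof (cases "n = 0")
  case False
  have "(\<Sum>i=0..k. real n * p i) = (\<Sum>i=0..k. real (z i))"
    using p_sum z_sum by (simp flip: sum_distrib_left of_nat_sum)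
  moreover have "vprec k (\<lambda>i. real n * p i) (\<lambda>i. real (z i))"
    using z_ge by (simp add: vprec_def vsucc_def)
  ultimately have "real (z 0) \<le> real n * p 0"
    by (rule vprec_sum_eq_imp_coord_0_ge)
  then have "chernoff_weight n p z 0 \<le> 1"
    using False p_pos by (simp add: chernoff_weight_def)
  moreover have "1 \<le> chernoff_weight n p z i" if "i \<in> {1..k}" for i
    using False p_pos z_ge that by (simp add: chernoff_weight_def vsucc_def)
  ultimately show ?thesis by force
qed (simp add: chernoff_weight_def)

theorem corollary1:
  fixes k n :: nat and p :: "nat \<Rightarrow> real" and z :: "nat \<Rightarrow> nat"
  assumes p_pos: "\<forall>i\<in>{0..k}. p i > 0"
    and p_sum: "(\<Sum>i=0..k. p i) = 1"
    and z_sum: "(\<Sum>i=0..k. z i) = n"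
  defines "\<mu> \<equiv> (\<lambda>i. real n * p i)"
  shows "(vprec k (\<lambda>i. real (z i)) \<mu> \<longrightarrow>
            multinomial_prob k n p (\<lambda>x. vprec k x z)
              \<le> (\<Prod>i=0..k. (\<mu> i / real (z i)) ^ z i))
       \<and> (vsucc k (\<lambda>i. real (z i)) \<mu> \<longrightarrow>
            multinomial_prob k n p (\<lambda>x. vsucc k x z)
              \<le> (\<Prod>i=0..k. (\<mu> i / real (z i)) ^ z i))"
proof -
  have weight_nonneg: "\<forall>i\<in>{0..k}. 0 \<le> chernoff_weight n p z i"
    using p_pos by (simp add: chernoff_weight_nonneg less_imp_le)
  have support_sum: "(\<Sum>i=0..k. x i) = (\<Sum>i=0..k. z i)" if "x \<in> multinomial_support k n" for x
    using that z_sum by (simp add: multinomial_support_def)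
  show ?thesis unfolding \<mu>_def
  proof (intro conjI impI)
    assume "vprec k (\<lambda>i. real (z i)) (\<lambda>i. real n * p i)"
    then have "\<forall>i\<in>{1..k}. chernoff_weight n p z i \<le> chernoff_weight n p z 0"
      by (rule chernoff_weight_le_weight_0_of_vprec[OF p_pos p_sum z_sum])
    with weight_nonneg support_sum show "multinomial_prob k n p (\<lambda>x. vprec k x z)
        \<le> (\<Prod>i=0..k. (real n * p i / real (z i)) ^ z i)"
      by (intro multinomial_prob_le_ratio_prod[OF p_pos z_sum] prod_power_le_of_vprec) auto
  next
    assume "vsucc k (\<lambda>i. real (z i)) (\<lambda>i. real n * p i)"
    then have "\<forall>i\<in>{1..k}. chernoff_weight n p z 0 \<le> chernoff_weight n p z i"
      by (rule chernoff_weight_0_le_weight_of_vsucc[OF p_pos p_sum z_sum])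
    with weight_nonneg support_sum show "multinomial_prob k n p (\<lambda>x. vsucc k x z)
        \<le> (\<Prod>i=0..k. (real n * p i / real (z i)) ^ z i)"
      by (intro multinomial_prob_le_ratio_prod[OF p_pos z_sum] prod_power_le_of_vsucc) auto
  qed
qed

end
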